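(* Let $G$ be a compact metrizable abelian monothetic group with Haar measure $\mu$. If $A\subset G$ has $\mu(A)>0$, then $2A-A=\{2a-b:a,b\in A\}$ contains a nonempty open set.
   Context: A topological group is monothetic if it has a dense cyclic subgroup. *)

theory Defs
  imports "HOL-Analysis.Analysis"
begin

definition topological_ab_group :: "'a::{topological_space, ab_group_add} itself \<Rightarrow> bool" where
  "topological_ab_group _ \<longleftrightarrow>
     continuous_on (UNIV :: ('a \<times> 'a) set) (\<lambda>p. fst p + snd p) \<and>
     continuous_on (UNIV :: 'a set) uminus"

definition cyclic_subgroup :: "'a::ab_group_add \<Rightarrow> 'a set" where
  "cyclic_subgroup g = range (\<lambda>n::nat. ((plus g) ^^ n) 0) \<union> range (\<lambda>n::nat. - (((plus g) ^^ n) 0))"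

definition monothetic :: "'a::{topological_space, ab_group_add} itself \<Rightarrow> bool" where
  "monothetic _ \<longleftrightarrow> (\<exists>g::'a. closure (cyclic_subgroup g) = UNIV)"

text \<open>(Normalised) Haar measure on a compact group: a translation-invariant Borel
  probability measure (regularity is automatic for finite Borel measures on
  compact metrizable spaces).\<close>
definition haar_measure :: "'a::{topological_space, ab_group_add} measure \<Rightarrow> bool" where
  "haar_measure M \<longleftrightarrow> sets M = sets borel \<and> emeasure M (space M) = 1 \<and>
     (\<forall>g. \<forall>A \<in> sets M. emeasure M ((\<lambda>x. g + x) ` A) = emeasure M A)"

end

theory Submission
  imports Defs
begin

(* By regularity, A contains a compact set K of positive measure. Integrating the sections of
   {(x, a). a \<in> K \<and> 2a - x \<in> K} in both orders, using that Haar measure is also invariant under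
   inversion, yields an x0 for which E = {a \<in> K. 2a - x0 \<in> K} has positive measure. By Steinhaus'
   theorem E - E contains a ball B around 0, and 2A - A contains x0 + 2(E - E), hence x0 + 2B.
   Finally 2B is a neighbourhood of 0: for a topological generator g, the closed set 2G \<union> (g + 2G)
   contains the dense cyclic subgroup, so the compact subgroup 2G has index at most 2 and is open;
   and doubling, a closed map with compact kernel, maps small balls onto neighbourhoods of 0 in 2G. *)

definition closed_open_approximable :: "'a::topological_space measure \<Rightarrow> 'a set \<Rightarrow> bool" where
  "closed_open_approximable M B \<longleftrightarrow>
     (\<forall>e>0. \<exists>F U. closed F \<and> open U \<and> F \<subseteq> B \<and> B \<subseteq> U \<and> measure M (U - F) < e)"

lemma Times_ball_subset_ball: "ball a r \<times> ball b r \<subseteq> ball (a, b) (2 * r)"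
proof clarify
  fix x y
  assume "x \<in> ball a r" "y \<in> ball b r"
  moreover have "dist (a, b) (x, y) \<le> dist a x + dist b y"
    unfolding dist_Pair_Pair by (rule sqrt_sum_squares_le_sum) auto
  ultimately show "(x, y) \<in> ball (a, b) (2 * r)"
    by simp
qed

locale finite_borel_measure = finite_measure M for M :: "'a::metric_space measure" +
  assumes sets_eq_borel: "sets M = sets borel"
begin

lemma space_eq_UNIV [simp]: "space M = UNIV"
  using sets_eq_imp_space_eq[OF sets_eq_borel] by simp

lemma open_sets: "open B \<Longrightarrow> B \<in> sets M"
  by (simp add: sets_eq_borel)

lemma closed_sets: "closed B \<Longrightarrow> B \<in> sets M"
  by (simp add: sets_eq_borel)

lemma compact_sets: "compact B \<Longrightarrow> B \<in> sets M"
  by (intro closed_sets compact_imp_closed)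

lemma closed_open_approximableD:
  assumes "closed_open_approximable M B" "e > 0"
  obtains F U where "closed F" "open U" "F \<subseteq> B" "B \<subseteq> U" "measure M (U - F) < e"
  using assms unfolding closed_open_approximable_def by auto

lemma closed_open_approximable_open:
  assumes "open B"
  shows "closed_open_approximable M B"
  unfolding closed_open_approximable_def
proof (intro allI impI)
  fix e :: real
  assume "e > 0"
  have "fsigma_in euclidean B"
    using open_imp_fsigma_in[OF metrizable_space_euclidean] assms by simp
  then obtain C where "\<forall>n. closed (C n)" "\<forall>n. C n \<subseteq> C (Suc n)" "(\<Union>n. C n) = B"
    unfolding fsigma_in_ascending by auto
  then have C: "\<And>n. closed (C n)" "incseq C" "(\<Union>n. C n) = B"
    by (auto intro: incseq_SucI)
  have "(\<lambda>n. measure M (C n)) \<longlonglongrightarrow> measure M (\<Union>n. C n)"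
    using C by (intro finite_Lim_measure_incseq) (auto intro: closed_sets)
  then have "(\<lambda>n. measure M (C n)) \<longlonglongrightarrow> measure M B"
    using C by simp
  then obtain n where "\<bar>measure M (C n) - measure M B\<bar> < e"
    using \<open>e > 0\<close> by (metis LIMSEQ_D real_norm_def order_refl)
  moreover have "measure M (B - C n) = measure M B - measure M (C n)"
    using C assms by (intro finite_measure_Diff) (auto intro: open_sets closed_sets)
  ultimately show "\<exists>F U. closed F \<and> open U \<and> F \<subseteq> B \<and> B \<subseteq> U \<and> measure M (U - F) < e"
    using C assms by (intro exI[of _ "C n"] exI[of _ B]) auto
qed

lemma closed_open_approximable_Compl:
  assumes "closed_open_approximable M B"
  shows "closed_open_approximable M (- B)"
  unfolding closed_open_approximable_def
proof (intro allI impI)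
  fix e :: real
  assume "e > 0"
  with assms obtain F U where "closed F" "open U" "F \<subseteq> B" "B \<subseteq> U" "measure M (U - F) < e"
    by (rule closed_open_approximableD)
  moreover have "- F - - U = U - F"
    by blast
  ultimately show "\<exists>F' U'. closed F' \<and> open U' \<and> F' \<subseteq> - B \<and> - B \<subseteq> U' \<and> measure M (U' - F') < e"
    by (intro exI[of _ "- U"] exI[of _ "- F"]) auto
qed

lemma measure_UN_diff_finite_UN_less:
  fixes F :: "nat \<Rightarrow> 'a set"
  assumes "range F \<subseteq> sets M" "e > 0"
  obtains N where "measure M ((\<Union>i. F i) - (\<Union>i<N. F i)) < e"
proof -
  have "incseq (\<lambda>N. \<Union>i<N. F i)"
    by (auto simp: incseq_def intro: less_le_trans)
  then have "(\<lambda>N. measure M (\<Union>i<N. F i)) \<longlonglongrightarrow> measure M (\<Union>N. \<Union>i<N. F i)"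
    using assms(1) by (intro finite_Lim_measure_incseq) auto
  moreover have "(\<Union>N. \<Union>i<N. F i) = (\<Union>i. F i)"
    by blast
  ultimately obtain N where "\<bar>measure M (\<Union>i<N. F i) - measure M (\<Union>i. F i)\<bar> < e"
    using LIMSEQ_D[of _ _ e] \<open>e > 0\<close> by fastforce
  moreover have "measure M ((\<Union>i. F i) - (\<Union>i<N. F i)) = measure M (\<Union>i. F i) - measure M (\<Union>i<N. F i)"
    using assms(1) by (intro finite_measure_Diff) auto
  ultimately have "measure M ((\<Union>i. F i) - (\<Union>i<N. F i)) < e"
    by linarith
  then show ?thesis
    by (rule that)
qed

lemma closed_open_approximable_UN:
  assumes "\<And>i::nat. closed_open_approximable M (A i)"
  shows "closed_open_approximable M (\<Union>i. A i)"
  unfolding closed_open_approximable_def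
proof (intro allI impI)
  fix e :: real
  assume "e > 0"
  define \<epsilon> where "\<epsilon> i = e / 2 * (1 / 2) ^ Suc i" for i
  have "\<epsilon> sums (e / 2)"
    unfolding \<epsilon>_def using sums_mult[OF power_half_series, of "e / 2"] by (simp only: mult_1_right)
  have "\<forall>i. \<exists>F U. closed F \<and> open U \<and> F \<subseteq> A i \<and> A i \<subseteq> U \<and> measure M (U - F) < \<epsilon> i"
  proof
    fix i
    have "\<epsilon> i > 0"
      using \<open>e > 0\<close> by (simp add: \<epsilon>_def)
    with assms obtain F U
      where "closed F" "open U" "F \<subseteq> A i" "A i \<subseteq> U" "measure M (U - F) < \<epsilon> i"
      by (rule closed_open_approximableD)
    then show "\<exists>F U. closed F \<and> open U \<and> F \<subseteq> A i \<and> A i \<subseteq> U \<and> measure M (U - F) < \<epsilon> i"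
      by auto
  qed
  then obtain F U
    where "\<forall>i. closed (F i) \<and> open (U i) \<and> F i \<subseteq> A i \<and> A i \<subseteq> U i \<and> measure M (U i - F i) < \<epsilon> i"
    unfolding choice_iff by auto
  then have F: "\<And>i. closed (F i)" and U: "\<And>i. open (U i)"
    and FAU: "\<And>i. F i \<subseteq> A i" "\<And>i. A i \<subseteq> U i" and small: "\<And>i. measure M (U i - F i) < \<epsilon> i"
    by auto
  have F_sets: "range F \<subseteq> sets M" and U_sets: "range U \<subseteq> sets M"
    using F U by (auto intro: closed_sets open_sets)
  then have diff_sets: "range (\<lambda>i. U i - F i) \<subseteq> sets M"
    by auto
  have summable: "summable (\<lambda>i. measure M (U i - F i))"
  proof (rule summable_comparison_test'[OF sums_summable[OF \<open>\<epsilon> sums (e / 2)\<close>]])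
    show "norm (measure M (U i - F i)) \<le> \<epsilon> i" for i
      using small[of i] by simp
  qed
  have "measure M ((\<Union>i. U i) - (\<Union>i. F i)) \<le> measure M (\<Union>i. U i - F i)"
    using diff_sets by (intro finite_measure_mono sets.countable_UN) auto
  also have "\<dots> \<le> (\<Sum>i. measure M (U i - F i))"
    using diff_sets summable by (rule finite_measure_subadditive_countably)
  also have "\<dots> \<le> e / 2"
    using sums_le[OF less_imp_le[OF small] summable_sums[OF summable] \<open>\<epsilon> sums (e / 2)\<close>] .
  finally have U_F: "measure M ((\<Union>i. U i) - (\<Union>i. F i)) \<le> e / 2" .
  obtain N where F_FN: "measure M ((\<Union>i. F i) - (\<Union>i<N. F i)) < e / 2"
    using F_sets half_gt_zero[OF \<open>e > 0\<close>] by (rule measure_UN_diff_finite_UN_less)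
  have "measure M ((\<Union>i. U i) - (\<Union>i<N. F i)) \<le>
      measure M (((\<Union>i. U i) - (\<Union>i. F i)) \<union> ((\<Union>i. F i) - (\<Union>i<N. F i)))"
    using F_sets U_sets by (intro finite_measure_mono) auto
  also have "\<dots> \<le> measure M ((\<Union>i. U i) - (\<Union>i. F i)) + measure M ((\<Union>i. F i) - (\<Union>i<N. F i))"
    using F_sets U_sets by (intro measure_Un_le) auto
  finally have "measure M ((\<Union>i. U i) - (\<Union>i<N. F i)) < e"
    using U_F F_FN by linarith
  moreover have "closed (\<Union>i<N. F i)" "open (\<Union>i. U i)"
    using F U by auto
  moreover have "(\<Union>i<N. F i) \<subseteq> (\<Union>i. A i)" "(\<Union>i. A i) \<subseteq> (\<Union>i. U i)"
    using FAU by fastforce+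
  ultimately show "\<exists>F' U'. closed F' \<and> open U' \<and> F' \<subseteq> (\<Union>i. A i) \<and> (\<Union>i. A i) \<subseteq> U' \<and> measure M (U' - F') < e"
    by blast
qed

lemma closed_open_approximable_sets:
  assumes "B \<in> sets M"
  shows "closed_open_approximable M B"
proof -
  have "B \<in> sigma_sets UNIV {S. open S}"
    using assms by (simp add: sets_eq_borel sets_borel)
  then show ?thesis
  proof induction
    case (Basic B)
    then show ?case by (simp add: closed_open_approximable_open)
  next
    case Empty
    show ?case by (simp add: closed_open_approximable_open)
  next
    case (Compl B)
    then show ?case by (simp add: closed_open_approximable_Compl Compl_eq_Diff_UNIV[symmetric])
  next
    case (Union A)
    then show ?case by (simp add: closed_open_approximable_UN)
  qed
qed

lemma closed_inner_approximation:
  assumes "B \<in> sets M" "measure M B > 0"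
  obtains F where "closed F" "F \<subseteq> B" "measure M F > 0"
proof -
  obtain F U where FU: "closed F" "open U" "F \<subseteq> B" "B \<subseteq> U" "measure M (U - F) < measure M B"
    using closed_open_approximable_sets[OF assms(1)] assms(2) by (rule closed_open_approximableD)
  then have "measure M (U - F) = measure M U - measure M F"
    by (intro finite_measure_Diff open_sets closed_sets) auto
  moreover have "measure M B \<le> measure M U"
    using FU by (intro finite_measure_mono open_sets)
  ultimately show ?thesis
    using FU that by simp
qed

lemma open_outer_approximation:
  assumes "B \<in> sets M" "e > 0"
  obtains U where "open U" "B \<subseteq> U" "measure M U < measure M B + e"
proof -
  obtain F U where FU: "closed F" "open U" "F \<subseteq> B" "B \<subseteq> U" "measure M (U - F) < e"
    using closed_open_approximable_sets[OF assms(1)] assms(2) by (rule closed_open_approximableD)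
  then have "measure M (U - F) = measure M U - measure M F"
    by (intro finite_measure_Diff open_sets closed_sets) auto
  moreover have "measure M F \<le> measure M B"
    using FU assms(1) by (intro finite_measure_mono)
  ultimately show ?thesis
    using FU that by simp
qed

(* Without second countability the product sigma algebra may miss Borel sets of the product,
   but a compact set is a countable intersection of finite unions of open boxes. *)
lemma compact_sets_pair_measure:
  assumes "compact C"
  shows "C \<in> sets (M \<Otimes>\<^sub>M M)"
proof -
  define box where "box n p = ball (fst p) (1 / Suc n) \<times> ball (snd p) (1 / Suc n)"
    for n and p :: "'a \<times> 'a"
  have "\<forall>n. \<exists>P. finite P \<and> P \<subseteq> C \<and> C \<subseteq> (\<Union>p\<in>P. box n p)"
  proof
    fix n
    have "C \<subseteq> (\<Union>p\<in>C. box n p)"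
      by (auto simp: box_def)
    then obtain P where "P \<subseteq> C" "finite P" "C \<subseteq> (\<Union>p\<in>P. box n p)"
      using compactE_image[OF assms, of C "box n"] by (auto simp: box_def open_Times)
    then show "\<exists>P. finite P \<and> P \<subseteq> C \<and> C \<subseteq> (\<Union>p\<in>P. box n p)"
      by auto
  qed
  then obtain P where P: "\<forall>n. finite (P n) \<and> P n \<subseteq> C \<and> C \<subseteq> (\<Union>p\<in>P n. box n p)"
    unfolding choice_iff by auto
  have "(\<Inter>n. \<Union>p\<in>P n. box n p) \<subseteq> C"
  proof
    fix z
    assume z: "z \<in> (\<Inter>n. \<Union>p\<in>P n. box n p)"
    have "\<exists>p\<in>C. dist p z < e" if "e > 0" for e
    proof -
      obtain n where n: "2 / Suc n < e"
        using \<open>e > 0\<close> reals_Archimedean[of "e / 2"] by (auto simp: field_simps inverse_eq_divide)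
      with z P obtain p where "p \<in> C" "z \<in> box n p"
        by blast
      then have "dist p z < 2 / Suc n"
        using Times_ball_subset_ball[of "fst p" "1 / Suc n" "snd p"] by (auto simp: box_def)
      with n \<open>p \<in> C\<close> show ?thesis
        by (meson less_trans)
    qed
    then show "z \<in> C"
      using closed_approachable[OF compact_imp_closed[OF assms]] by blast
  qed
  with P have "C = (\<Inter>n. \<Union>p\<in>P n. box n p)"
    by auto
  also have "\<dots> \<in> sets (M \<Otimes>\<^sub>M M)"
    using P by (intro sets.countable_INT sets.finite_UN) (auto simp: box_def intro!: pair_measureI open_sets)
  finally show ?thesis .
qed

end

lemma image_add_eq_vimage_diff:
  fixes c :: "'a::ab_group_add"
  shows "(\<lambda>x. c + x) ` S = (\<lambda>x. x - c) -` S"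
proof
  show "(\<lambda>x. c + x) ` S \<subseteq> (\<lambda>x. x - c) -` S"
    by auto
  show "(\<lambda>x. x - c) -` S \<subseteq> (\<lambda>x. c + x) ` S"
  proof
    fix x
    assume "x \<in> (\<lambda>x. x - c) -` S"
    then show "x \<in> (\<lambda>x. c + x) ` S"
      by (intro image_eqI[of _ _ "x - c"]) auto
  qed
qed

lemma image_uminus_eq_vimage:
  fixes S :: "'a::group_add set"
  shows "uminus ` S = uminus -` S"
proof
  show "uminus ` S \<subseteq> uminus -` S"
    by auto
  show "uminus -` S \<subseteq> uminus ` S"
  proof
    fix x
    assume "x \<in> uminus -` S"
    then show "x \<in> uminus ` S"
      by (intro image_eqI[of _ _ "- x"]) auto
  qed
qed

lemma cyclic_subgroup_subset_doubles:
  fixes g :: "'a::ab_group_add"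
  shows "cyclic_subgroup g \<subseteq> range (\<lambda>x. x + x) \<union> (\<lambda>x. g + x) ` range (\<lambda>x. x + x)"
proof -
  define S where "S = {y. \<exists>h. y = h + h \<or> y = g + (h + h)}"
  have plus_g: "g + y \<in> S" if "y \<in> S" for y
  proof -
    from that obtain h where "y = h + h \<or> y = g + (h + h)"
      by (auto simp: S_def)
    then have "g + y = g + (h + h) \<or> g + y = (g + h) + (g + h)"
      by (auto simp: algebra_simps)
    then show ?thesis
      unfolding S_def by blast
  qed
  have minus: "- y \<in> S" if "y \<in> S" for y
  proof -
    from that obtain h where "y = h + h \<or> y = g + (h + h)"
      by (auto simp: S_def)
    then have "- y = (- h) + (- h) \<or> - y = g + ((- g - h) + (- g - h))"
      by (auto simp: algebra_simps)
    then show ?thesis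
      unfolding S_def by blast
  qed
  have "((plus g) ^^ n) 0 \<in> S" for n
  proof (induction n)
    case 0
    show ?case
      unfolding S_def by (intro CollectI exI[of _ 0] disjI1) simp
  next
    case (Suc n)
    then show ?case
      using plus_g by simp
  qed
  with minus have "cyclic_subgroup g \<subseteq> S"
    unfolding cyclic_subgroup_def by auto
  also have "S \<subseteq> range (\<lambda>x. x + x) \<union> (\<lambda>x. g + x) ` range (\<lambda>x. x + x)"
    unfolding S_def by auto
  finally show ?thesis .
qed

(* G only fixes the type, matching the TYPE('a) arguments of topological_ab_group and monothetic. *)
locale compact_metric_ab_group =
  fixes G :: "'a::{metric_space, ab_group_add} itself"
  assumes topological_ab_group: "topological_ab_group G"
    and compact_UNIV: "compact (UNIV :: 'a set)"
begin

lemma continuous_on_group_add [continuous_intros]: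
  fixes f g :: "'b::topological_space \<Rightarrow> 'a"
  assumes "continuous_on S f" "continuous_on S g"
  shows "continuous_on S (\<lambda>x. f x + g x)"
proof -
  have "continuous_on UNIV (\<lambda>p::'a \<times> 'a. fst p + snd p)"
    using topological_ab_group by (simp add: topological_ab_group_def)
  then have "continuous_on S ((\<lambda>p. fst p + snd p) \<circ> (\<lambda>x. (f x, g x)))"
    by (intro continuous_on_compose continuous_on_Pair assms) (auto elim: continuous_on_subset)
  then show ?thesis
    by (simp add: o_def)
qed

lemma continuous_on_group_minus [continuous_intros]:
  fixes f :: "'b::topological_space \<Rightarrow> 'a"
  assumes "continuous_on S f"
  shows "continuous_on S (\<lambda>x. - f x)"
proof -
  have "continuous_on UNIV (uminus :: 'a \<Rightarrow> 'a)"
    using topological_ab_group by (simp add: topological_ab_group_def)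
  then have "continuous_on S (uminus \<circ> f)"
    by (intro continuous_on_compose assms) (auto elim: continuous_on_subset)
  then show ?thesis
    by (simp add: o_def)
qed

lemma continuous_on_group_diff [continuous_intros]:
  fixes f g :: "'b::topological_space \<Rightarrow> 'a"
  assumes "continuous_on S f" "continuous_on S g"
  shows "continuous_on S (\<lambda>x. f x - g x)"
  using continuous_on_group_add[OF assms(1) continuous_on_group_minus[OF assms(2)]] by simp

lemma closed_imp_compact: "closed (S :: 'a set) \<Longrightarrow> compact S"
  using compact_Int_closed[OF compact_UNIV] by simp

lemma closed_translation_group: "closed S \<Longrightarrow> closed ((\<lambda>x. c + x) ` (S :: 'a set))"
  unfolding image_add_eq_vimage_diff by (intro closed_vimage continuous_intros)

lemma open_translation_group: "open S \<Longrightarrow> open ((\<lambda>x. c + x) ` (S :: 'a set))"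
  unfolding image_add_eq_vimage_diff by (intro open_vimage continuous_intros)

lemma uniformly_small_translation:
  assumes "e > 0"
  obtains d where "d > 0" "\<And>a s :: 'a. dist 0 s < d \<Longrightarrow> dist a (a + s) < e"
proof -
  have "compact (UNIV :: ('a \<times> 'a) set)"
    using compact_Times[OF compact_UNIV compact_UNIV] by simp
  then have "uniformly_continuous_on UNIV (\<lambda>p::'a \<times> 'a. fst p + snd p)"
    by (intro compact_uniformly_continuous continuous_intros)
  from this[unfolded uniformly_continuous_on_def, rule_format, OF \<open>e > 0\<close>]
  obtain d where "d > 0"
    and d: "\<forall>p\<in>UNIV. \<forall>p'\<in>UNIV. dist p' p < d \<longrightarrow> dist (fst p' + snd p' :: 'a) (fst p + snd p) < e"
    by blast
  have "dist a (a + s) < e" if "dist 0 s < d" for a s :: 'a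
    using d[rule_format, of "(a, 0)" "(a, s)"] that by (simp add: dist_Pair_Pair dist_commute)
  with \<open>d > 0\<close> show ?thesis
    using that by auto
qed

lemma closed_doubles: "closed (range (\<lambda>x::'a. x + x))"
  by (intro compact_imp_closed compact_continuous_image compact_UNIV continuous_intros)

lemma open_doubles:
  assumes "monothetic G"
  shows "open (range (\<lambda>x::'a. x + x))"
proof -
  define D where "D = range (\<lambda>x::'a. x + x)"
  obtain g :: 'a where g: "closure (cyclic_subgroup g) = UNIV"
    using assms by (auto simp: monothetic_def)
  have closed_gD: "closed ((\<lambda>x. g + x) ` D)"
    unfolding D_def by (intro closed_translation_group closed_doubles)
  have "closure (cyclic_subgroup g) \<subseteq> D \<union> (\<lambda>x. g + x) ` D"
    unfolding D_def
    by (intro closure_minimal cyclic_subgroup_subset_doubles closed_Un closed_doubles closed_gD[unfolded D_def])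
  with g have D_Un: "D \<union> (\<lambda>x. g + x) ` D = UNIV"
    by auto
  show ?thesis
  proof (cases "g \<in> D")
    case True
    then obtain k where "g = k + k"
      by (auto simp: D_def)
    then have "(\<lambda>x. g + x) ` D \<subseteq> D"
      by (auto simp: D_def algebra_simps intro: range_eqI[of _ _ "k + _"])
    with D_Un have "D = UNIV"
      by blast
    then show ?thesis
      by (simp add: D_def)
  next
    case False
    have "D \<inter> (\<lambda>x. g + x) ` D = {}"
    proof (rule ccontr)
      assume "D \<inter> (\<lambda>x. g + x) ` D \<noteq> {}"
      then obtain h k where "k + k = g + (h + h)"
        by (auto simp: D_def)
      then have "g = (k - h) + (k - h)"
        by (simp add: algebra_simps)
      with False show False
        by (auto simp: D_def)
    qed
    with D_Un have "D = - ((\<lambda>x. g + x) ` D)"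
      by auto
    with closed_gD have "open D"
      by (metis open_Compl)
    then show ?thesis
      by (simp add: D_def)
  qed
qed

(* V = ball 0 e + ker(doubling) is open, so doubling maps its compact complement C onto a closed
   set avoiding 0. Near 0, every double t = s + s thus has s \<in> V, and removing the kernel part
   of s gives a half of t in ball 0 e. *)
lemma doubling_image_contains_ball:
  assumes "monothetic G" "e > 0"
  obtains r where "r > 0" "ball 0 r \<subseteq> (\<lambda>s. s + s) ` ball (0::'a) e"
proof -
  define V where "V = (\<Union>k\<in>{k::'a. k + k = 0}. (\<lambda>x. k + x) ` ball 0 e)"
  define C where "C = - V"
  have "open V"
    unfolding V_def by (intro open_UN ballI open_translation_group open_ball)
  then have "compact ((\<lambda>s. s + s) ` C)"
    unfolding C_def by (intro compact_continuous_image closed_imp_compact continuous_intros) auto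
  then have closed_image: "closed ((\<lambda>s. s + s) ` C)"
    by (rule compact_imp_closed)
  have "0 \<notin> (\<lambda>s. s + s) ` C"
  proof
    assume "0 \<in> (\<lambda>s. s + s) ` C"
    then obtain k where "k + k = 0" "k \<notin> V"
      by (auto simp: C_def)
    moreover have "k \<in> (\<lambda>x. k + x) ` ball 0 e"
      using \<open>e > 0\<close> by (intro image_eqI[of _ _ 0]) auto
    ultimately show False
      by (auto simp: V_def)
  qed
  moreover have "(0::'a) \<in> range (\<lambda>x. x + x)"
    by (intro range_eqI[of _ _ 0]) simp
  ultimately have "open (range (\<lambda>x. x + x) - (\<lambda>s. s + s) ` C)"
    and "0 \<in> range (\<lambda>x. x + x) - (\<lambda>s. s + s) ` C"
    using open_doubles[OF assms(1)] closed_image by (auto intro: open_Diff)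
  then obtain r where "r > 0" and r: "ball 0 r \<subseteq> range (\<lambda>x. x + x) - (\<lambda>s. s + s) ` C"
    by (meson open_contains_ball)
  have "ball 0 r \<subseteq> (\<lambda>s. s + s) ` ball (0::'a) e"
  proof
    fix t :: 'a
    assume "t \<in> ball 0 r"
    with r obtain s where "t = s + s" "s \<notin> C"
      by blast
    then obtain k v where "k + k = 0" "v \<in> ball 0 e" "s = k + v"
      by (auto simp: C_def V_def)
    then have "t = (k + k) + (v + v)"
      using \<open>t = s + s\<close> by (simp add: algebra_simps)
    with \<open>k + k = 0\<close> \<open>v \<in> ball 0 e\<close> show "t \<in> (\<lambda>s. s + s) ` ball 0 e"
      by simp
  qed
  with \<open>r > 0\<close> show ?thesis
    using that by blast
qed

end

locale compact_haar_group = compact_metric_ab_group G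
  for G :: "'a::{metric_space, ab_group_add} itself" +
  fixes M :: "'a measure"
  assumes haar: "haar_measure M"
begin

sublocale finite_borel_measure M
proof (intro finite_borel_measure.intro finite_borel_measure_axioms.intro finite_measureI)
  show "emeasure M (space M) \<noteq> \<infinity>" "sets M = sets borel"
    using haar by (simp_all add: haar_measure_def)
qed

sublocale P: pair_sigma_finite M M
  by (simp add: pair_sigma_finite_def sigma_finite_measure_axioms)

lemma emeasure_UNIV [simp]: "emeasure M UNIV = 1"
  using haar by (simp add: haar_measure_def)

lemma emeasure_translation: "B \<in> sets M \<Longrightarrow> emeasure M ((\<lambda>x. g + x) ` B) = emeasure M B"
  using haar by (simp add: haar_measure_def)

lemma closed_sets_pair_measure: "closed (C :: ('a \<times> 'a) set) \<Longrightarrow> C \<in> sets (M \<Otimes>\<^sub>M M)"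
  using compact_Int_closed[OF compact_Times[OF compact_UNIV compact_UNIV]]
  by (intro compact_sets_pair_measure) simp

(* Fubini on {(x, y). y - x \<in> K}, whose sections are translates of K and of -K. *)
lemma emeasure_reflection:
  assumes "compact K"
  shows "emeasure M (uminus ` K) = emeasure M K"
proof -
  define D where "D = (\<lambda>p. snd p - fst p) -` K"
  have D: "D \<in> sets (M \<Otimes>\<^sub>M M)"
    unfolding D_def
    by (intro closed_sets_pair_measure closed_vimage compact_imp_closed assms continuous_intros)
  have K: "K \<in> sets M" "uminus ` K \<in> sets M"
    using assms by (auto intro!: compact_sets compact_continuous_image continuous_intros)
  have "emeasure (M \<Otimes>\<^sub>M M) D = (\<integral>\<^sup>+x. emeasure M (Pair x -` D) \<partial>M)"
    by (rule emeasure_pair_measure_alt[OF D])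
  also have "\<dots> = (\<integral>\<^sup>+x. emeasure M ((\<lambda>y. x + y) ` K) \<partial>M)"
    by (simp add: D_def image_add_eq_vimage_diff vimage_def)
  also have "\<dots> = emeasure M K"
    using K by (simp add: emeasure_translation)
  finally have "emeasure (M \<Otimes>\<^sub>M M) D = emeasure M K" .
  moreover have "emeasure (M \<Otimes>\<^sub>M M) D = (\<integral>\<^sup>+y. emeasure M ((\<lambda>x. (x, y)) -` D) \<partial>M)"
    by (rule P.emeasure_pair_measure_alt2[OF D])
  moreover have "(\<lambda>x. (x, y)) -` D = (\<lambda>x. y + x) ` (uminus ` K)" for y
    by (auto simp: D_def image_add_eq_vimage_diff image_uminus_eq_vimage)
  ultimately show ?thesis
    using K by (simp add: emeasure_translation)
qed

lemma measure_translation: "B \<in> sets M \<Longrightarrow> measure M ((\<lambda>x. g + x) ` B) = measure M B"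
  by (simp add: measure_def emeasure_translation)

(* Fubini on C = {(x, a). a \<in> K \<and> 2a - x \<in> K}: the x-sections are the sets in question,
   the a-sections are translates of -K for a \<in> K, so (M \<Otimes> M)(C) = M(K)^2. *)
lemma ex_positive_measure_midpoint_set:
  assumes "compact K" "emeasure M K > 0"
  shows "\<exists>x. emeasure M {a \<in> K. a + a - x \<in> K} > 0"
proof (rule ccontr)
  assume "\<not> ?thesis"
  then have null: "emeasure M {a \<in> K. a + a - x \<in> K} = 0" for x
    by (simp add: not_less)
  define C where "C = snd -` K \<inter> (\<lambda>p. snd p + snd p - fst p) -` K"
  have C: "C \<in> sets (M \<Otimes>\<^sub>M M)"
    unfolding C_def
    by (intro closed_sets_pair_measure closed_Int closed_vimage compact_imp_closed assms(1) continuous_intros)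
  have K: "K \<in> sets M" "uminus ` K \<in> sets M"
    using assms(1) by (auto intro!: compact_sets compact_continuous_image continuous_intros)
  have "emeasure (M \<Otimes>\<^sub>M M) C = (\<integral>\<^sup>+x. emeasure M (Pair x -` C) \<partial>M)"
    by (rule emeasure_pair_measure_alt[OF C])
  also have "\<dots> = 0"
    by (simp add: C_def vimage_def Int_def null)
  finally have "emeasure (M \<Otimes>\<^sub>M M) C = 0" .
  moreover have "emeasure (M \<Otimes>\<^sub>M M) C = (\<integral>\<^sup>+a. emeasure M ((\<lambda>x. (x, a)) -` C) \<partial>M)"
    by (rule P.emeasure_pair_measure_alt2[OF C])
  moreover have "emeasure M ((\<lambda>x. (x, a)) -` C) = emeasure M K * indicator K a" for a
  proof (cases "a \<in> K")
    case True
    then have "(\<lambda>x. (x, a)) -` C = (\<lambda>x. x - (a + a)) -` uminus -` K"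
      by (auto simp: C_def)
    also have "\<dots> = (\<lambda>x. (a + a) + x) ` uminus ` K"
      by (simp only: image_add_eq_vimage_diff image_uminus_eq_vimage)
    finally show ?thesis
      using True K by (simp add: emeasure_translation emeasure_reflection[OF assms(1)])
  next
    case False
    then have "(\<lambda>x. (x, a)) -` C = {}"
      by (auto simp: C_def)
    with False show ?thesis
      by simp
  qed
  ultimately have "emeasure M K * emeasure M K = 0"
    using nn_integral_cmult_indicator[OF K(1)] by simp
  with assms(2) show False
    by simp
qed

lemma Steinhaus_ball_subset_differences:
  assumes "compact E" "measure M E > 0"
  obtains \<delta> where "\<delta> > 0" "ball 0 \<delta> \<subseteq> {b - a | a b. a \<in> E \<and> b \<in> E}"
proof -
  have E: "E \<in> sets M"
    using assms(1) by (rule compact_sets)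
  obtain U where "open U" "E \<subseteq> U" and U: "measure M U < measure M E + measure M E"
    using open_outer_approximation[OF E assms(2)] by blast
  obtain \<epsilon> where "\<epsilon> > 0" and \<epsilon>: "(\<Union>x\<in>E. ball x \<epsilon>) \<subseteq> U"
    using compact_subset_open_imp_ball_epsilon_subset[OF assms(1) \<open>open U\<close> \<open>E \<subseteq> U\<close>] by blast
  obtain \<delta> where "\<delta> > 0" and \<delta>: "\<And>a s :: 'a. dist 0 s < \<delta> \<Longrightarrow> dist a (a + s) < \<epsilon>"
    using uniformly_small_translation[OF \<open>\<epsilon> > 0\<close>] by blast
  have "\<exists>a\<in>E. a + s \<in> E" if "s \<in> ball 0 \<delta>" for s
  proof (rule ccontr)
    assume "\<not> (\<exists>a\<in>E. a + s \<in> E)"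
    then have disjoint: "E \<inter> (\<lambda>x. s + x) ` E = {}"
      by (auto simp: add.commute)
    have sE: "(\<lambda>x. s + x) ` E \<in> sets M"
      using assms(1) by (intro compact_sets compact_continuous_image continuous_intros)
    have "(\<lambda>x. s + x) ` E \<subseteq> U"
      using \<delta> that \<epsilon> by (force simp: add.commute)
    with \<open>E \<subseteq> U\<close> have "measure M (E \<union> (\<lambda>x. s + x) ` E) \<le> measure M U"
      using \<open>open U\<close> by (intro finite_measure_mono open_sets) auto
    moreover have "measure M (E \<union> (\<lambda>x. s + x) ` E) = measure M E + measure M E"
      using finite_measure_Union[OF E sE disjoint] measure_translation[OF E] by simp
    ultimately show False
      using U by simp
  qed
  then have "ball 0 \<delta> \<subseteq> {b - a | a b. a \<in> E \<and> b \<in> E}"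
    by force
  with \<open>\<delta> > 0\<close> show ?thesis
    using that by blast
qed

lemma ball_subset_double_differences:
  assumes "monothetic G" "compact E" "measure M E > 0"
  obtains r where "r > 0" "ball 0 r \<subseteq> {(b + b) - (a + a) | a b. a \<in> E \<and> b \<in> E}"
proof -
  obtain \<delta> where "\<delta> > 0" and \<delta>: "ball 0 \<delta> \<subseteq> {b - a | a b. a \<in> E \<and> b \<in> E}"
    using assms(2,3) by (rule Steinhaus_ball_subset_differences)
  obtain r where "r > 0" and r: "ball 0 r \<subseteq> (\<lambda>s. s + s) ` ball (0::'a) \<delta>"
    using doubling_image_contains_ball[OF assms(1) \<open>\<delta> > 0\<close>] by blast
  have "(\<lambda>s. s + s) ` ball 0 \<delta> \<subseteq> {(b + b) - (a + a) | a b. a \<in> E \<and> b \<in> E}"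
  proof
    fix t :: 'a
    assume "t \<in> (\<lambda>s. s + s) ` ball 0 \<delta>"
    then obtain s where "t = s + s" "s \<in> ball 0 \<delta>"
      by (rule imageE)
    moreover from \<delta> \<open>s \<in> ball 0 \<delta>\<close> obtain a b where "a \<in> E" "b \<in> E" "s = b - a"
      by blast
    ultimately have "t = (b + b) - (a + a)"
      by (simp add: algebra_simps)
    with \<open>a \<in> E\<close> \<open>b \<in> E\<close> show "t \<in> {(b + b) - (a + a) | a b. a \<in> E \<and> b \<in> E}"
      by blast
  qed
  with r have "ball 0 r \<subseteq> {(b + b) - (a + a) | a b. a \<in> E \<and> b \<in> E}"
    by (rule subset_trans)
  with \<open>r > 0\<close> show ?thesis
    by (rule that)
qed

lemma ex_compact_midpoint_subset:
  assumes "A \<in> sets M" "emeasure M A > 0"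
  obtains E x0 where "compact E" "measure M E > 0" "E \<subseteq> A" "(\<lambda>a. a + a - x0) ` E \<subseteq> A"
proof -
  have "measure M A > 0"
    using assms(2) by (simp add: emeasure_eq_measure)
  then obtain K where "closed K" "K \<subseteq> A" "measure M K > 0"
    by (rule closed_inner_approximation[OF assms(1)])
  then obtain x0 where "emeasure M {a \<in> K. a + a - x0 \<in> K} > 0"
    using ex_positive_measure_midpoint_set[OF closed_imp_compact[OF \<open>closed K\<close>]]
    by (auto simp: emeasure_eq_measure)
  moreover have "{a \<in> K. a + a - x0 \<in> K} = K \<inter> (\<lambda>a. a + a - x0) -` K"
    by auto
  with \<open>closed K\<close> have "compact {a \<in> K. a + a - x0 \<in> K}"
    by (auto intro!: closed_imp_compact closed_Int closed_vimage continuous_intros)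
  ultimately show ?thesis
    using that[of "{a \<in> K. a + a - x0 \<in> K}" x0] \<open>K \<subseteq> A\<close> by (auto simp: emeasure_eq_measure)
qed

end

theorem corollary7p6:
  fixes \<mu> :: "'a::{metric_space, ab_group_add} measure"
    and A :: "'a set"
  assumes "topological_ab_group TYPE('a)"
    and "compact (UNIV :: 'a set)"
    and "monothetic TYPE('a)"
    and "haar_measure \<mu>"
    and "A \<in> sets \<mu>"
    and "emeasure \<mu> A > 0"
  shows "\<exists>U. open U \<and> U \<noteq> {} \<and> U \<subseteq> {a + a - b | a b. a \<in> A \<and> b \<in> A}"
proof -
  interpret compact_haar_group "TYPE('a)" \<mu>
    by (intro compact_haar_group.intro compact_metric_ab_group.intro
        compact_haar_group_axioms.intro assms(1,2,4))
  obtain E x0 where E: "compact E" "measure \<mu> E > 0" "E \<subseteq> A" "(\<lambda>a. a + a - x0) ` E \<subseteq> A"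
    using assms(5,6) by (rule ex_compact_midpoint_subset)
  obtain r where "r > 0" and r: "ball 0 r \<subseteq> {(b + b) - (a + a) | a b. a \<in> E \<and> b \<in> E}"
    using assms(3) E(1,2) by (rule ball_subset_double_differences)
  define U where "U = (\<lambda>x. x - x0) -` ball 0 r"
  have "U \<subseteq> {a + a - b | a b. a \<in> A \<and> b \<in> A}"
  proof
    fix x
    assume "x \<in> U"
    with r have "x - x0 \<in> {(b + b) - (a + a) | a b. a \<in> E \<and> b \<in> E}"
      by (auto simp: U_def)
    then obtain a b where "a \<in> E" "b \<in> E" "x - x0 = (b + b) - (a + a)"
      by blast
    moreover from this have "x = b + b - (a + a - x0)"
      by (simp add: algebra_simps diff_eq_eq)
    ultimately show "x \<in> {a + a - b | a b. a \<in> A \<and> b \<in> A}"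
      using E(3,4) by blast
  qed
  moreover have "open U" "x0 \<in> U"
    using \<open>r > 0\<close> by (auto simp: U_def intro!: open_vimage continuous_intros)
  ultimately show ?thesis
    by blast
qed

end
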